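(* A perfect Euler cuboid exists if and only if there exist rational numbers $a,b,u$ with $0<u<1$ and $(a,b)\in D_{ab}$ such that $P(a,b,u)=0$.
   Context: An Euler cuboid is a rectangular parallelepiped whose three edge lengths and three face diagonal lengths are all positive integers; a perfect Euler cuboid is an Euler cuboid whose space diagonal also has integer length, i.e. a $7$-tuple of positive integers $(a,b,c,\alpha,\beta,\gamma,d)$ with $a^2+b^2=\gamma^2$, $b^2+c^2=\alpha^2$, $c^2+a^2=\beta^2$, $a^2+b^2+c^2=d^2$. Let $D_{uz}=\{(u,z)\in\mathbb{R}^2: 0<u<1,\ 0<z<1\}$. Define $f\colon D_{uz}\to\mathbb{R}^2$ by $f(u,z)=(a(u,z),b(u,z))$, where $a(u,z)$ and $b(u,z)$ are the positive real numbers determined by $$a^2=\frac{u^2+z^2}{u^2z^2+1},\qquad b^2=\frac{(1+u^2)(1+z^2)-2z(1-u^2)}{(1+u^2)(1+z^2)+2z(1-u^2)}$$ (both right-hand sides are positive on $D_{uz}$), and let $D_{ab}=f(D_{uz})$. The characteristic polynomial is $$\begin{aligned}P(a,b,u)={}&u^4a^4b^4+6a^4u^2b^4-2u^4a^4b^2-2u^4a^2b^4+4u^2b^4a^2+4a^4u^2b^2-12u^4a^2b^2\\&+u^4a^4+u^4b^4+a^4b^4+6a^4u^2+6u^2b^4-8a^2b^2u^2-2u^4a^2-2u^4b^2-2a^4b^2-2b^4a^2\\&+u^4+b^4+a^4+4a^2u^2+4b^2u^2-12b^2a^2+6u^2-2a^2-2b^2+1.\end{aligned}$$ *)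

theory Defs
  imports Complex_Main
begin

definition perfect_euler_cuboid :: "nat \<Rightarrow> nat \<Rightarrow> nat \<Rightarrow> nat \<Rightarrow> nat \<Rightarrow> nat \<Rightarrow> nat \<Rightarrow> bool" where
  "perfect_euler_cuboid a b c \<alpha> \<beta> \<gamma> d \<longleftrightarrow>
     a > 0 \<and> b > 0 \<and> c > 0 \<and> \<alpha> > 0 \<and> \<beta> > 0 \<and> \<gamma> > 0 \<and> d > 0 \<and>
     a^2 + b^2 = \<gamma>^2 \<and> b^2 + c^2 = \<alpha>^2 \<and> c^2 + a^2 = \<beta>^2 \<and> a^2 + b^2 + c^2 = d^2"

definition D_uz :: "(real \<times> real) set" where
  "D_uz = {(u, z). 0 < u \<and> u < 1 \<and> 0 < z \<and> z < 1}"

definition f_map :: "real \<times> real \<Rightarrow> real \<times> real" where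
  "f_map p = (case p of (u, z) \<Rightarrow>
     (sqrt ((u^2 + z^2) / (u^2 * z^2 + 1)),
      sqrt (((1 + u^2) * (1 + z^2) - 2 * z * (1 - u^2)) /
            ((1 + u^2) * (1 + z^2) + 2 * z * (1 - u^2)))))"

definition D_ab :: "(real \<times> real) set" where
  "D_ab = f_map ` D_uz"

definition char_poly :: "real \<Rightarrow> real \<Rightarrow> real \<Rightarrow> real" where
  "char_poly a b u =
     u^4*a^4*b^4 + 6*a^4*u^2*b^4 - 2*u^4*a^4*b^2 - 2*u^4*a^2*b^4 + 4*u^2*b^4*a^2 + 4*a^4*u^2*b^2 - 12*u^4*a^2*b^2
     + u^4*a^4 + u^4*b^4 + a^4*b^4 + 6*a^4*u^2 + 6*u^2*b^4 - 8*a^2*b^2*u^2 - 2*u^4*a^2 - 2*u^4*b^2 - 2*a^4*b^2 - 2*b^4*a^2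
     + u^4 + b^4 + a^4 + 4*a^2*u^2 + 4*b^2*u^2 - 12*b^2*a^2 + 6*u^2 - 2*a^2 - 2*b^2 + 1"

end

theory Submission
  imports Defs
begin

(* The key observation is that P is governed by "half-angle cosines":
   writing cos_half t = (1 - t^2)/(1 + t^2) and sin_half t = 2t/(1 + t^2) (the rational
   parametrisation of the unit circle), P(a,b,u) = 0 iff
   cos_half a ^ 2 + cos_half b ^ 2 = cos_half u ^ 2.

   Forward: for a cuboid with edges A, B, C, face diagonals alpha, beta, gamma and space
   diagonal D, the half-angle tangents u = (D - gamma)/C, z = (gamma - A)/B,
   a = (D - A)/alpha, b = (D - B)/beta of four right triangles are rational, satisfy
   f(u, z) = (a, b), and have cosines A/D, B/D, gamma/D, whence P(a,b,u) = 0.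
   Backward: a rational zero yields the rational cuboid with edges cos_half a, cos_half b,
   sin_half u, face diagonals sin_half a, sin_half b, cos_half u and space diagonal 1;
   clearing a common denominator gives an integer one. *)

definition cuboid_eqs :: "real \<Rightarrow> real \<Rightarrow> real \<Rightarrow> real \<Rightarrow> real \<Rightarrow> real \<Rightarrow> real \<Rightarrow> bool" where
  "cuboid_eqs a b c \<alpha> \<beta> \<gamma> d \<longleftrightarrow>
     a^2 + b^2 = \<gamma>^2 \<and> b^2 + c^2 = \<alpha>^2 \<and> c^2 + a^2 = \<beta>^2 \<and> a^2 + b^2 + c^2 = d^2"

lemma cuboid_eqs_scale:
  assumes "cuboid_eqs a b c \<alpha> \<beta> \<gamma> d"
  shows "cuboid_eqs (k*a) (k*b) (k*c) (k*\<alpha>) (k*\<beta>) (k*\<gamma>) (k*d)"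
  using assms by (simp add: cuboid_eqs_def power_mult_distrib flip: distrib_left)

lemma perfect_euler_cuboid_iff_real:
  "perfect_euler_cuboid a b c \<alpha> \<beta> \<gamma> d \<longleftrightarrow>
     0 < a \<and> 0 < b \<and> 0 < c \<and> 0 < \<alpha> \<and> 0 < \<beta> \<and> 0 < \<gamma> \<and> 0 < d \<and>
     cuboid_eqs (real a) (real b) (real c) (real \<alpha>) (real \<beta>) (real \<gamma>) (real d)"
  unfolding perfect_euler_cuboid_def cuboid_eqs_def
  by (simp flip: of_nat_power of_nat_add)

(* Cosine and sine of the angle 2 arctan t, expressed rationally in t. *)
definition cos_half :: "real \<Rightarrow> real" where "cos_half t = (1 - t^2) / (1 + t^2)"
definition sin_half :: "real \<Rightarrow> real" where "sin_half t = 2 * t / (1 + t^2)"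

lemma one_plus_sq_pos: "0 < 1 + (t::real)^2"
  by (simp add: add_pos_nonneg)

lemma half_angle_pythagoras: "cos_half t ^ 2 + sin_half t ^ 2 = 1"
  using one_plus_sq_pos[of t]
  by (simp add: cos_half_def sin_half_def field_simps) (simp add: algebra_simps power2_eq_square)

lemma char_poly_factored:
  "char_poly a b u = ((1-a^2)*(1+b^2)*(1+u^2))^2 + ((1-b^2)*(1+a^2)*(1+u^2))^2
                     - ((1-u^2)*(1+a^2)*(1+b^2))^2"
  unfolding char_poly_def by algebra

lemma scaled_cos_half:
  "(k * (1 + t^2))^2 * cos_half t ^ 2 = (k * (1 - t^2))^2"
  using one_plus_sq_pos[of t] by (simp add: cos_half_def power_divide power_mult_distrib)

lemma char_poly_half_angle:
  "char_poly a b u = ((1+a^2)*(1+b^2)*(1+u^2))^2 * (cos_half a ^ 2 + cos_half b ^ 2 - cos_half u ^ 2)"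
proof -
  have "((1+a^2)*(1+b^2)*(1+u^2))^2 * cos_half a ^ 2 = ((1-a^2)*(1+b^2)*(1+u^2))^2"
    using scaled_cos_half[of "(1+b^2)*(1+u^2)" a] by (simp add: ac_simps)
  moreover have "((1+a^2)*(1+b^2)*(1+u^2))^2 * cos_half b ^ 2 = ((1-b^2)*(1+a^2)*(1+u^2))^2"
    using scaled_cos_half[of "(1+a^2)*(1+u^2)" b] by (simp add: ac_simps)
  moreover have "((1+a^2)*(1+b^2)*(1+u^2))^2 * cos_half u ^ 2 = ((1-u^2)*(1+a^2)*(1+b^2))^2"
    using scaled_cos_half[of "(1+a^2)*(1+b^2)" u] by (simp add: ac_simps)
  ultimately show ?thesis
    unfolding char_poly_factored by (simp add: distrib_left right_diff_distrib)
qed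

lemma half_angle_pos:
  assumes "0 < t" "t < 1"
  shows "0 < cos_half t" "0 < sin_half t"
  using assms one_plus_sq_pos[of t]
  by (auto simp: cos_half_def sin_half_def power_less_one_iff)

lemma half_angle_Rats:
  assumes "t \<in> \<rat>"
  shows "cos_half t \<in> \<rat>" "sin_half t \<in> \<rat>"
  using assms by (auto simp: cos_half_def sin_half_def)

(* For a right triangle with legs x, y and hypotenuse h, the tangent t of half the angle
   opposite y lies in (0,1), and its square and half-angle cosine are rational in x, h. *)
lemma half_angle_of_right_triangle:
  fixes x y h :: real
  assumes pos: "0 < x" "0 < y" "0 < h" and pyth: "x^2 + y^2 = h^2"
  defines "t \<equiv> (h - x) / y"
  shows "0 < t" "t < 1" "t = y / (h + x)" "t^2 = (h - x) / (h + x)" "cos_half t = x / h"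
proof -
  have "x < h"
  proof (rule power_less_imp_less_base[of x 2])
    show "x^2 < h^2" using pos(2) pyth by (simp add: add_strict_increasing flip: pyth)
  qed (use pos in simp)
  moreover have "h < x + y"
    using pos pyth by (intro power_less_imp_less_base[of h 2]) (auto simp: power2_sum)
  ultimately show "0 < t" "t < 1" using pos by (auto simp: t_def field_simps)
  have y2: "y^2 = (h - x) * (h + x)" using pyth by (simp add: algebra_simps power2_eq_square)
  then show "t = y / (h + x)"
    using pos \<open>x < h\<close> by (simp add: t_def field_simps power2_eq_square)
  have "t^2 = (h - x)^2 / y^2" by (simp add: t_def power_divide)
  also have "\<dots> = (h - x) / (h + x)"
    using pos \<open>x < h\<close> unfolding y2 by (simp add: power2_eq_square)
  finally show t2: "t^2 = (h - x) / (h + x)" .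
  have "1 - (h - x) / (h + x) = 2 * x / (h + x)" "1 + (h - x) / (h + x) = 2 * h / (h + x)"
    using pos by (simp_all add: field_simps)
  then show "cos_half t = x / h"
    using pos unfolding cos_half_def t2 by simp
qed

(* Addition formula for the squared half-angle tangents of the two nested right
   triangles (A, B, gamma) and (gamma, C, D): it computes the first component of f. *)
lemma tanh_addition:
  fixes D G A :: real
  assumes "0 < A" "0 < G" "0 < D"
  shows "((D-G)/(D+G) + (G-A)/(G+A)) / ((D-G)/(D+G) * ((G-A)/(G+A)) + 1) = (D-A)/(D+A)"
proof -
  define k where "k = 2 * G / ((D+G) * (G+A))"
  have "(D-G)/(D+G) + (G-A)/(G+A) = k * (D-A)"
    using assms by (simp add: k_def divide_simps) (simp add: algebra_simps)
  moreover have "(D-G)/(D+G) * ((G-A)/(G+A)) + 1 = k * (D+A)"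
    using assms by (simp add: k_def divide_simps) (simp add: algebra_simps)
  moreover have "k \<noteq> 0" using assms by (simp add: k_def)
  ultimately show ?thesis by simp
qed

lemma f_map_second_identity:
  fixes D G A B :: real
  assumes "0 < A" "0 < G" "0 < D" "0 < B"
  defines "U \<equiv> (D-G)/(D+G)" and "Z \<equiv> (G-A)/(G+A)" and "z \<equiv> B/(G+A)"
  shows "((1 + U) * (1 + Z) - 2 * z * (1 - U)) / ((1 + U) * (1 + Z) + 2 * z * (1 - U))
         = (D-B)/(D+B)"
proof -
  define k where "k = 4 * G / ((D+G) * (G+A))"
  have "(1 + U) * (1 + Z) - 2 * z * (1 - U) = k * (D-B)"
    using assms(1-4) unfolding U_def Z_def z_def k_def
    by (simp add: divide_simps) (simp add: algebra_simps)
  moreover have "(1 + U) * (1 + Z) + 2 * z * (1 - U) = k * (D+B)"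
    using assms(1-4) unfolding U_def Z_def z_def k_def
    by (simp add: divide_simps) (simp add: algebra_simps)
  moreover have "k \<noteq> 0" using assms by (simp add: k_def)
  ultimately show ?thesis by simp
qed

lemma char_root_of_cuboid:
  fixes A B C \<alpha> \<beta> \<gamma> D :: real
  assumes pos: "0 < A" "0 < B" "0 < C" "0 < \<alpha>" "0 < \<beta>" "0 < \<gamma>" "0 < D"
    and eqs: "cuboid_eqs A B C \<alpha> \<beta> \<gamma> D"
  defines "u \<equiv> (D - \<gamma>) / C" and "z \<equiv> (\<gamma> - A) / B"
    and "a \<equiv> (D - A) / \<alpha>" and "b \<equiv> (D - B) / \<beta>"
  shows "(u, z) \<in> D_uz" "f_map (u, z) = (a, b)" "char_poly a b u = 0"
proof -
  have face: "A^2 + B^2 = \<gamma>^2" and space: "\<gamma>^2 + C^2 = D^2"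
    and sideA: "A^2 + \<alpha>^2 = D^2" and sideB: "B^2 + \<beta>^2 = D^2"
    using eqs by (simp_all add: cuboid_eqs_def algebra_simps)
  note u = half_angle_of_right_triangle[OF pos(6,3,7) space, folded u_def]
  note z = half_angle_of_right_triangle[OF pos(1,2,6) face, folded z_def]
  note a = half_angle_of_right_triangle[OF pos(1,4,7) sideA, folded a_def]
  note b = half_angle_of_right_triangle[OF pos(2,5,7) sideB, folded b_def]
  show "(u, z) \<in> D_uz" using u z by (simp add: D_uz_def)
  have "f_map (u, z) = (sqrt (a^2), sqrt (b^2))"
    unfolding f_map_def prod.case u(4) z(4) unfolding z(3)
    unfolding tanh_addition[OF pos(1,6,7)] f_map_second_identity[OF pos(1,6,7,2)] a(4) b(4) ..
  then show "f_map (u, z) = (a, b)" using a(1) b(1) by simp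
  have "(A / D)^2 + (B / D)^2 = (\<gamma> / D)^2" by (simp add: power_divide flip: face add_divide_distrib)
  then show "char_poly a b u = 0"
    unfolding char_poly_half_angle a(5) b(5) u(5) by simp
qed

lemma D_ab_in_unit_square:
  assumes "(a, b) \<in> D_ab"
  shows "0 < a" "a < 1" "0 < b" "b < 1"
proof -
  from assms obtain u z where "0 < u" "u < 1" "0 < z" "z < 1" and ab: "(a, b) = f_map (u, z)"
    unfolding D_ab_def D_uz_def by auto
  then have u2: "0 < u^2" "u^2 < 1" and z2: "0 < z^2" "z^2 < 1"
    by (simp_all add: power_less_one_iff)
  define N where "N = (1 + u^2) * (1 + z^2)"
  define M where "M = 2 * z * (1 - u^2)"
  have "0 < (1 - u^2) * (1 - z^2)" using u2 z2 by simp
  then have "u^2 + z^2 < u^2 * z^2 + 1" by (simp add: algebra_simps)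
  moreover have "0 < u^2 + z^2" using u2 z2 by (simp add: add_pos_pos)
  ultimately show "0 < a" "a < 1"
    using ab by (simp_all add: f_map_def)
  have "0 < M" using \<open>0 < z\<close> u2 by (simp add: M_def)
  moreover have "M < N"
  proof -
    have "M < 2 * z" using \<open>0 < z\<close> u2 by (simp add: M_def)
    also have "2 * z \<le> 1 + z^2" using power2_diff[of 1 z] zero_le_power2[of "1 - z"] by simp
    also have "1 + z^2 < N" using u2 z2 by (simp add: N_def algebra_simps add_pos_pos)
    finally show ?thesis .
  qed
  ultimately have "0 < N - M" "N - M < N + M" by simp_all
  then show "0 < b" "b < 1"
    using ab by (simp_all add: f_map_def flip: N_def M_def)
qed

lemma rational_cuboid_of_char_root:
  assumes "char_poly a b u = 0"
  shows "cuboid_eqs (cos_half a) (cos_half b) (sin_half u) (sin_half a) (sin_half b) (cos_half u) 1"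
proof -
  have "(1 + a^2) * (1 + b^2) * (1 + u^2) \<noteq> 0"
    using one_plus_sq_pos[of a] one_plus_sq_pos[of b] one_plus_sq_pos[of u] by simp
  then have "cos_half a ^ 2 + cos_half b ^ 2 = cos_half u ^ 2"
    using assms unfolding char_poly_half_angle by simp
  then show ?thesis
    using half_angle_pythagoras[of a] half_angle_pythagoras[of b] half_angle_pythagoras[of u]
    by (simp add: cuboid_eqs_def)
qed

lemma common_denominator:
  fixes S :: "real set"
  assumes "finite S" "S \<subseteq> \<rat>"
  shows "\<exists>N::nat. 0 < N \<and> (\<forall>x\<in>S. real N * x \<in> \<int>)"
  using assms
proof (induction S rule: finite_induct)
  case empty
  show ?case by (intro exI[of _ 1]) simp
next
  case (insert x S)
  then obtain N :: nat where N: "0 < N" "\<forall>y\<in>S. real N * y \<in> \<int>" by auto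
  from insert.prems obtain p q :: int where q: "0 < q" and x: "x = of_int p / of_int q"
    by (auto elim: Rats_cases')
  have "real (N * nat q) * x = of_int (int N * p)" using q by (simp add: x)
  then have "real (N * nat q) * x \<in> \<int>" by (metis Ints_of_int)
  moreover have "real (N * nat q) * y \<in> \<int>" if "y \<in> S" for y
  proof -
    have "real (N * nat q) * y = of_int q * (real N * y)" using q by simp
    moreover have "of_int q * (real N * y) \<in> \<int>" using N(2) that by (simp add: Ints_mult)
    ultimately show ?thesis by metis
  qed
  ultimately show ?case using N q by (intro exI[of _ "N * nat q"]) auto
qed

lemma perfect_cuboid_of_rational:
  fixes a b c \<alpha> \<beta> \<gamma> d :: real
  assumes rat: "a \<in> \<rat>" "b \<in> \<rat>" "c \<in> \<rat>" "\<alpha> \<in> \<rat>" "\<beta> \<in> \<rat>" "\<gamma> \<in> \<rat>" "d \<in> \<rat>"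
    and pos: "0 < a" "0 < b" "0 < c" "0 < \<alpha>" "0 < \<beta>" "0 < \<gamma>" "0 < d"
    and eqs: "cuboid_eqs a b c \<alpha> \<beta> \<gamma> d"
  shows "\<exists>a b c \<alpha> \<beta> \<gamma> d. perfect_euler_cuboid a b c \<alpha> \<beta> \<gamma> d"
proof -
  let ?S = "{a, b, c, \<alpha>, \<beta>, \<gamma>, d}"
  obtain N :: nat where N: "0 < N" "\<forall>x\<in>?S. real N * x \<in> \<int>"
    using common_denominator[of ?S] rat by auto
  have "\<forall>x\<in>?S. \<exists>n::nat. real N * x = real n"
  proof
    fix x assume "x \<in> ?S"
    then have "real N * x \<in> \<nat>" using N pos by (auto simp: Nats_altdef2)
    then show "\<exists>n::nat. real N * x = real n" by (auto elim: Nats_cases)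
  qed
  from bchoice[OF this] obtain \<kappa> :: "real \<Rightarrow> nat"
    where \<kappa>: "\<forall>x\<in>?S. real N * x = real (\<kappa> x)" by blast
  have "0 < \<kappa> x" if "x \<in> ?S" for x
  proof -
    have "0 < real N * x" using N(1) pos that by auto
    moreover have "real N * x = real (\<kappa> x)" using \<kappa> that by blast
    ultimately show ?thesis by simp
  qed
  moreover have "cuboid_eqs (real (\<kappa> a)) (real (\<kappa> b)) (real (\<kappa> c)) (real (\<kappa> \<alpha>))
          (real (\<kappa> \<beta>)) (real (\<kappa> \<gamma>)) (real (\<kappa> d))"
    using cuboid_eqs_scale[OF eqs, of "real N"] \<kappa> by simp
  ultimately have "perfect_euler_cuboid (\<kappa> a) (\<kappa> b) (\<kappa> c) (\<kappa> \<alpha>) (\<kappa> \<beta>) (\<kappa> \<gamma>) (\<kappa> d)"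
    unfolding perfect_euler_cuboid_iff_real by simp
  then show ?thesis by blast
qed

theorem theorem5p2:
  shows "(\<exists>a b c \<alpha> \<beta> \<gamma> d. perfect_euler_cuboid a b c \<alpha> \<beta> \<gamma> d) \<longleftrightarrow>
         (\<exists>a b u :: real. a \<in> \<rat> \<and> b \<in> \<rat> \<and> u \<in> \<rat> \<and> 0 < u \<and> u < 1 \<and>
             (a, b) \<in> D_ab \<and> char_poly a b u = 0)"
proof
  assume "\<exists>a b c \<alpha> \<beta> \<gamma> d. perfect_euler_cuboid a b c \<alpha> \<beta> \<gamma> d"
  then obtain A B C \<alpha> \<beta> \<gamma> D where "perfect_euler_cuboid A B C \<alpha> \<beta> \<gamma> D" by blast
  then have pos: "0 < real A" "0 < real B" "0 < real C" "0 < real \<alpha>" "0 < real \<beta>"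
      "0 < real \<gamma>" "0 < real D"
    and eqs: "cuboid_eqs (real A) (real B) (real C) (real \<alpha>) (real \<beta>) (real \<gamma>) (real D)"
    by (simp_all add: perfect_euler_cuboid_iff_real)
  note root = char_root_of_cuboid[OF pos eqs]
  let ?u = "(real D - real \<gamma>) / real C"
  let ?a = "(real D - real A) / real \<alpha>" and ?b = "(real D - real B) / real \<beta>"
  have "?a \<in> \<rat>" "?b \<in> \<rat>" "?u \<in> \<rat>" by simp_all
  moreover have "0 < ?u" "?u < 1" using root(1) by (simp_all add: D_uz_def)
  moreover have "(?a, ?b) \<in> D_ab" unfolding D_ab_def using root(1,2) by (metis image_eqI)
  ultimately show "\<exists>a b u :: real. a \<in> \<rat> \<and> b \<in> \<rat> \<and> u \<in> \<rat> \<and> 0 < u \<and> u < 1 \<and>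
             (a, b) \<in> D_ab \<and> char_poly a b u = 0" using root(3) by blast
next
  assume "\<exists>a b u :: real. a \<in> \<rat> \<and> b \<in> \<rat> \<and> u \<in> \<rat> \<and> 0 < u \<and> u < 1 \<and>
             (a, b) \<in> D_ab \<and> char_poly a b u = 0"
  then obtain a b u :: real where rat: "a \<in> \<rat>" "b \<in> \<rat>" "u \<in> \<rat>"
    and u: "0 < u" "u < 1" and ab: "(a, b) \<in> D_ab" and root: "char_poly a b u = 0" by blast
  note a = half_angle_pos[OF D_ab_in_unit_square(1,2)[OF ab]]
  note b = half_angle_pos[OF D_ab_in_unit_square(3,4)[OF ab]]
  note u = half_angle_pos[OF u]
  show "\<exists>a b c \<alpha> \<beta> \<gamma> d. perfect_euler_cuboid a b c \<alpha> \<beta> \<gamma> d"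
    using perfect_cuboid_of_rational[OF _ _ _ _ _ _ _ a(1) b(1) u(2) a(2) b(2) u(1) _
        rational_cuboid_of_char_root[OF root]] half_angle_Rats rat by simp
qed

end
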